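(* Let $I\subseteq\mathbb{R}$ be a nonempty open interval, let $f:I\to\mathbb{R}$ be Wright convex, and let $g:I\to\mathbb{R}$ be a convex function with $g|_{I\cap\mathbb{Q}}=f|_{I\cap\mathbb{Q}}$. Then for all $u,v>0$ and all $x\in I$ with $x+u+v\in I$, $$f(x+u+v)-f(x+u)-f(x+v)+f(x)=g(x+u+v)-g(x+u)-g(x+v)+g(x).$$
   Context: A function $f:I\to\mathbb{R}$ on an interval $I$ is called Wright convex if $f(tx+(1-t)y)+f((1-t)x+ty)\leq f(x)+f(y)$ for all $x,y\in I$ and $t\in[0,1]$. *)

theory Defs
  imports "HOL-Analysis.Analysis"
begin

definition wright_convex_on :: "real set \<Rightarrow> (real \<Rightarrow> real) \<Rightarrow> bool" where
  "wright_convex_on I f \<longleftrightarrow>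
     (\<forall>x\<in>I. \<forall>y\<in>I. \<forall>t\<in>{0..1::real}.
        f (t * x + (1 - t) * y) + f ((1 - t) * x + t * y) \<le> f x + f y)"

end

theory Submission
  imports Defs
begin

text \<open>Wright convexity says exactly that the second difference
  \<open>f(x+u+v) - f(x+u) - f(x+v) + f(x)\<close> is nonnegative for \<open>u, v \<ge> 0\<close>, so it is
  monotone under inclusion of the rectangles spanned by \<open>x, x+u, x+v, x+u+v\<close>.
  Squeezing such a rectangle between rational rectangles from inside and from outside,
  the second differences of \<open>f\<close> and \<open>g\<close> agree at rational points, and those of the
  continuous \<open>g\<close> converge, so both bounds tend to the second difference of \<open>g\<close>.\<close>

definition second_difference :: "(real \<Rightarrow> real) \<Rightarrow> real \<Rightarrow> real \<Rightarrow> real \<Rightarrow> real" where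
  "second_difference f x u v = f (x + u + v) - f (x + u) - f (x + v) + f x"

lemma second_difference_split:
  "second_difference f x (u1 + u2) v = second_difference f x u1 v + second_difference f (x + u1) u2 v"
  unfolding second_difference_def by (simp add: algebra_simps)

lemma second_difference_commute: "second_difference f x u v = second_difference f x v u"
  unfolding second_difference_def by (simp add: algebra_simps)

lemma wright_convex_second_difference_nonneg:
  assumes "wright_convex_on I f" and "x \<in> I" and "x + u + v \<in> I" and "u \<ge> 0" and "v \<ge> 0"
  shows "second_difference f x u v \<ge> 0"
proof (cases "u + v = 0")
  case True
  then have "u = 0" "v = 0" using assms(4,5) by auto
  then show ?thesis by (simp add: second_difference_def)
next
  case False
  then have uv: "u + v > 0" using assms(4,5) by auto
  define t where "t = v / (u + v)"
  have t: "t \<in> {0..1}" using assms(4,5) uv by (auto simp: t_def field_simps)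
  have "t * (u + v) = v" using uv by (simp add: t_def)
  then have "t * x + (1 - t) * (x + u + v) = x + u" "(1 - t) * x + t * (x + u + v) = x + v"
    by (simp_all add: algebra_simps)
  moreover have "f (t * x + (1 - t) * (x + u + v)) + f ((1 - t) * x + t * (x + u + v))
      \<le> f x + f (x + u + v)"
    using assms(1-3) t unfolding wright_convex_on_def by blast
  ultimately show ?thesis unfolding second_difference_def by simp
qed

lemma wright_convex_second_difference_mono:
  assumes W: "wright_convex_on I f" and iv: "is_interval I"
    and x: "x \<in> I" and x3: "x + u + v \<in> I"
    and "x \<le> y" and "u' \<ge> 0" and "v' \<ge> 0" and "y + u' \<le> x + u" and "y + v' \<le> x + v"
  shows "second_difference f y u' v' \<le> second_difference f x u v"
proof -
  have inI: "z \<in> I" if "x \<le> z" "z \<le> x + u + v" for z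
    using mem_is_interval_1_I[OF iv x x3] that by blast
  define a where "a = y - x"
  have y: "y = x + a" by (simp add: a_def)
  have a: "a \<ge> 0" and "v \<ge> 0" and "u \<ge> a + u'" and "v \<ge> a + v'"
    using assms(5-9) by (auto simp: a_def)
  note bounds = this assms(6,7)
  \<comment> \<open>Cut the rectangle at \<open>x + a\<close> and \<open>x + a + u'\<close> in the first direction, then at
      \<open>x + a + v'\<close> in the second; all pieces except the inner one are nonnegative.\<close>
  have "second_difference f x u v = second_difference f x a v + second_difference f y u' v
      + second_difference f (y + u') (u - a - u') v"
    using second_difference_split[of f x a "u - a" v] second_difference_split[of f y u' "u - a - u'" v]
    by (simp add: y add.assoc)
  moreover have "second_difference f y u' v
      = second_difference f y u' v' + second_difference f (y + v') u' (v - v')"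
    using second_difference_split[of f y v' "v - v'" u'] by (simp add: second_difference_commute)
  moreover have "second_difference f x a v \<ge> 0"
    by (rule wright_convex_second_difference_nonneg[OF W x]) (use bounds inI in auto)
  moreover have "second_difference f (y + u') (u - a - u') v \<ge> 0"
    by (rule wright_convex_second_difference_nonneg[OF W]) (use bounds x3 inI y in auto)
  moreover have "second_difference f (y + v') u' (v - v') \<ge> 0"
    by (rule wright_convex_second_difference_nonneg[OF W]) (use bounds inI y in auto)
  ultimately show ?thesis by linarith
qed

lemma Rats_sequence_from_above:
  fixes x :: real
  obtains q where "\<And>n. q n \<in> \<rat>" "\<And>n. x < q n" "q \<longlonglongrightarrow> x"
proof -
  have "\<forall>n. \<exists>r\<in>\<rat>. x < r \<and> r < x + inverse (Suc n)"
    using Rats_dense_in_real by simp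
  then obtain q where q: "\<And>n. q n \<in> \<rat> \<and> x < q n \<and> q n < x + inverse (Suc n)"
    by metis
  have "q \<longlonglongrightarrow> x"
    by (rule tendsto_sandwich[OF _ _ tendsto_const LIMSEQ_inverse_real_of_nat_add])
      (use q in \<open>auto intro: always_eventually less_imp_le\<close>)
  with q that show ?thesis by blast
qed

lemma Rats_sequence_from_below:
  fixes x :: real
  obtains q where "\<And>n. q n \<in> \<rat>" "\<And>n. q n < x" "q \<longlonglongrightarrow> x"
proof -
  obtain q where "\<And>n. q n \<in> \<rat>" "\<And>n. - x < q n" "q \<longlonglongrightarrow> - x"
    using Rats_sequence_from_above by blast
  moreover have "(\<lambda>n. - q n) \<longlonglongrightarrow> x"
    using tendsto_minus[OF \<open>q \<longlonglongrightarrow> - x\<close>] by simp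
  ultimately show ?thesis
    using that[of "\<lambda>n. - q n"] by (auto simp: minus_less_iff)
qed

lemma second_difference_tendsto:
  fixes g :: "real \<Rightarrow> real"
  assumes "isCont g x" "isCont g (x + u)" "isCont g (x + v)" "isCont g (x + u + v)"
    and "(y \<longlongrightarrow> x) F" "(s \<longlongrightarrow> u) F" "(t \<longlongrightarrow> v) F"
  shows "((\<lambda>n. second_difference g (y n) (s n) (t n)) \<longlongrightarrow> second_difference g x u v) F"
  unfolding second_difference_def
  by (intro tendsto_intros isCont_tendsto_compose[OF assms(1)] isCont_tendsto_compose[OF assms(2)]
      isCont_tendsto_compose[OF assms(3)] isCont_tendsto_compose[OF assms(4)] assms(5-7))

lemma second_difference_tendsto_along_Rats:
  fixes f g :: "real \<Rightarrow> real"
  assumes iv: "is_interval I" and "open I" and "continuous_on I g"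
    and agree: "\<And>r. r \<in> I \<Longrightarrow> r \<in> \<rat> \<Longrightarrow> g r = f r"
    and x: "x \<in> I" and x3: "x + u + v \<in> I" and "u \<ge> 0" and "v \<ge> 0"
    and rational: "\<And>n. a n \<in> \<rat>" "\<And>n. p n \<in> \<rat>" "\<And>n. q n \<in> \<rat>"
    and a: "a \<longlonglongrightarrow> x" and p: "p \<longlonglongrightarrow> x + u" and q: "q \<longlonglongrightarrow> x + v"
  shows "(\<lambda>n. second_difference f (a n) (p n - a n) (q n - a n)) \<longlonglongrightarrow> second_difference g x u v"
proof -
  have corners: "x + u \<in> I" "x + v \<in> I"
    using mem_is_interval_1_I[OF iv x x3] assms(7,8) by auto
  have cont: "isCont g z" if "z \<in> I" for z
    using assms(2,3) that continuous_on_eq_continuous_at by blast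
  have pa: "(\<lambda>n. p n - a n) \<longlonglongrightarrow> u" and qa: "(\<lambda>n. q n - a n) \<longlonglongrightarrow> v"
    using tendsto_diff[OF p a] tendsto_diff[OF q a] by simp_all
  have "(\<lambda>n. p n + q n - a n) \<longlonglongrightarrow> x + u + v"
    using tendsto_diff[OF tendsto_add[OF p q] a] by (simp add: add.assoc)
  then have "\<forall>\<^sub>F n in sequentially. a n \<in> I \<and> p n \<in> I \<and> q n \<in> I \<and> p n + q n - a n \<in> I"
    using assms(2) x x3 corners a p q by (auto intro!: eventually_conj elim!: topological_tendstoD)
  then have "\<forall>\<^sub>F n in sequentially.
      second_difference g (a n) (p n - a n) (q n - a n) = second_difference f (a n) (p n - a n) (q n - a n)"
    by eventually_elim (simp add: second_difference_def agree rational Rats_add Rats_diff add_diff_eq)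
  moreover have "(\<lambda>n. second_difference g (a n) (p n - a n) (q n - a n)) \<longlonglongrightarrow> second_difference g x u v"
    by (rule second_difference_tendsto[OF _ _ _ _ a pa qa]) (use cont x x3 corners in auto)
  ultimately show ?thesis
    by (rule Lim_transform_eventually[rotated])
qed

lemma second_difference_le_of_Rats_agree:
  fixes f g :: "real \<Rightarrow> real"
  assumes "wright_convex_on I f" "is_interval I" "open I" "continuous_on I g"
    and "\<And>r. r \<in> I \<Longrightarrow> r \<in> \<rat> \<Longrightarrow> g r = f r"
    and x: "x \<in> I" and x3: "x + u + v \<in> I" and u: "u > 0" and v: "v > 0"
  shows "second_difference g x u v \<le> second_difference f x u v"
proof -
  obtain a p q where "\<And>n. a n \<in> \<rat>" "\<And>n. x < a n" "a \<longlonglongrightarrow> x"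
    and "\<And>n. p n \<in> \<rat>" "\<And>n. p n < x + u" "p \<longlonglongrightarrow> x + u"
    and "\<And>n. q n \<in> \<rat>" "\<And>n. q n < x + v" "q \<longlonglongrightarrow> x + v"
    by (metis Rats_sequence_from_above Rats_sequence_from_below)
  note seqs = this
  have "\<forall>\<^sub>F n in sequentially. 0 < p n - a n" "\<forall>\<^sub>F n in sequentially. 0 < q n - a n"
    using order_tendstoD(1)[OF tendsto_diff[OF seqs(6,3)], of 0]
      order_tendstoD(1)[OF tendsto_diff[OF seqs(9,3)], of 0] u v by simp_all
  then have "\<forall>\<^sub>F n in sequentially.
      second_difference f (a n) (p n - a n) (q n - a n) \<le> second_difference f x u v"
    by eventually_elim
      (rule wright_convex_second_difference_mono[OF assms(1,2) x x3];
        use seqs in \<open>auto intro: less_imp_le\<close>)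
  moreover have "(\<lambda>n. second_difference f (a n) (p n - a n) (q n - a n))
      \<longlonglongrightarrow> second_difference g x u v"
    by (rule second_difference_tendsto_along_Rats[OF assms(2-5) x x3]) (use seqs u v in auto)
  ultimately show ?thesis
    by (intro tendsto_upperbound[of _ _ sequentially]) simp_all
qed

lemma second_difference_ge_of_Rats_agree:
  fixes f g :: "real \<Rightarrow> real"
  assumes "wright_convex_on I f" "is_interval I" "open I" "continuous_on I g"
    and "\<And>r. r \<in> I \<Longrightarrow> r \<in> \<rat> \<Longrightarrow> g r = f r"
    and x: "x \<in> I" and x3: "x + u + v \<in> I" and u: "u \<ge> 0" and v: "v \<ge> 0"
  shows "second_difference f x u v \<le> second_difference g x u v"
proof -
  obtain a p q where "\<And>n. a n \<in> \<rat>" "\<And>n. a n < x" "a \<longlonglongrightarrow> x"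
    and "\<And>n. p n \<in> \<rat>" "\<And>n. x + u < p n" "p \<longlonglongrightarrow> x + u"
    and "\<And>n. q n \<in> \<rat>" "\<And>n. x + v < q n" "q \<longlonglongrightarrow> x + v"
    by (metis Rats_sequence_from_above Rats_sequence_from_below)
  note seqs = this
  have "(\<lambda>n. p n + q n - a n) \<longlonglongrightarrow> x + u + v"
    using tendsto_diff[OF tendsto_add[OF seqs(6,9)] seqs(3)] by (simp add: add.assoc)
  then have "\<forall>\<^sub>F n in sequentially. a n \<in> I \<and> p n + q n - a n \<in> I"
    using assms(3) x x3 seqs(3) by (auto intro!: eventually_conj elim!: topological_tendstoD)
  then have "\<forall>\<^sub>F n in sequentially.
      second_difference f x u v \<le> second_difference f (a n) (p n - a n) (q n - a n)"
    by eventually_elim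
      (rule wright_convex_second_difference_mono[OF assms(1,2)];
        use seqs u v in \<open>auto simp: add_diff_eq intro: less_imp_le\<close>)
  moreover have "(\<lambda>n. second_difference f (a n) (p n - a n) (q n - a n))
      \<longlonglongrightarrow> second_difference g x u v"
    by (rule second_difference_tendsto_along_Rats[OF assms(2-5) x x3]) (use seqs u v in auto)
  ultimately show ?thesis
    by (intro tendsto_lowerbound[of _ _ sequentially]) simp_all
qed

theorem mainTheorem5:
  fixes I :: "real set" and f g :: "real \<Rightarrow> real"
  assumes "is_interval I" and "open I" and "I \<noteq> {}"
    and "wright_convex_on I f"
    and "convex_on I g"
    and "\<And>q. q \<in> I \<Longrightarrow> q \<in> \<rat> \<Longrightarrow> g q = f q"
  shows "\<forall>u>0. \<forall>v>0. \<forall>x\<in>I. x + u + v \<in> I \<longrightarrow>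
           f (x + u + v) - f (x + u) - f (x + v) + f x
         = g (x + u + v) - g (x + u) - g (x + v) + g x"
proof (intro allI impI ballI)
  fix u v x :: real
  assume "u > 0" and "v > 0" and "x \<in> I" and "x + u + v \<in> I"
  moreover have "continuous_on I g"
    using convex_on_continuous[OF assms(2,5)] .
  ultimately have "second_difference g x u v = second_difference f x u v"
    using second_difference_le_of_Rats_agree[OF assms(4,1,2) _ assms(6)]
      second_difference_ge_of_Rats_agree[OF assms(4,1,2) _ assms(6)]
    by (simp add: order_antisym less_imp_le)
  then show "f (x + u + v) - f (x + u) - f (x + v) + f x
      = g (x + u + v) - g (x + u) - g (x + v) + g x"
    by (simp add: second_difference_def)
qed

end
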